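(* Let $C\subseteq\mathbb{F}_2^n$ be a binary linear constant weight code of dimension $k\ge2$. Then $\mathrm{PAut}(C)\cong S_3$ if and only if $k=2$, the weight of $C$ is $2$, and $n\in\{3,4\}$.
   Context: A binary linear constant weight code of weight $w$ is an $\mathbb{F}_2$-subspace of $\mathbb{F}_2^n$ all of whose non-zero vectors have exactly $w$ coordinates equal to $1$. $S_n$ acts on $\mathbb{F}_2^n$ by $\sigma(v_1,\dots,v_n)=(v_{\sigma^{-1}(1)},\dots,v_{\sigma^{-1}(n)})$, and $\mathrm{PAut}(C)=\{\sigma\in S_n:\sigma(C)=C\}$. *)

theory Defs
  imports "HOL.Vector_Spaces" "HOL-Library.Z2" "HOL-Library.Function_Algebras" "HOL-Algebra.Sym_Groups"
begin

text \<open>Vectors of F_2^n are functions nat => bit vanishing outside {0..<n}.\<close>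

definition f2scale :: "bit \<Rightarrow> (nat \<Rightarrow> bit) \<Rightarrow> (nat \<Rightarrow> bit)" where
  "f2scale a v = (\<lambda>i. a * v i)"

definition F2n :: "nat \<Rightarrow> (nat \<Rightarrow> bit) set" where
  "F2n n = {v. \<forall>i. n \<le> i \<longrightarrow> v i = 0}"

definition binary_linear_code :: "nat \<Rightarrow> (nat \<Rightarrow> bit) set \<Rightarrow> bool" where
  "binary_linear_code n C \<longleftrightarrow> C \<subseteq> F2n n \<and> Modules.module.subspace f2scale C"

definition hweight :: "(nat \<Rightarrow> bit) \<Rightarrow> nat" where
  "hweight v = card {i. v i = 1}"

definition constant_weight_code :: "nat \<Rightarrow> nat \<Rightarrow> (nat \<Rightarrow> bit) set \<Rightarrow> bool" where
  "constant_weight_code n w C \<longleftrightarrow>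
     binary_linear_code n C \<and> (\<forall>v\<in>C. v \<noteq> 0 \<longrightarrow> hweight v = w)"

definition code_dim :: "(nat \<Rightarrow> bit) set \<Rightarrow> nat" where
  "code_dim C = Vector_Spaces.vector_space.dim f2scale C"

definition perm_act :: "(nat \<Rightarrow> nat) \<Rightarrow> (nat \<Rightarrow> bit) \<Rightarrow> (nat \<Rightarrow> bit)" where
  "perm_act \<sigma> v = (\<lambda>i. v (inv_into UNIV \<sigma> i))"

definition PAut :: "nat \<Rightarrow> (nat \<Rightarrow> bit) set \<Rightarrow> (nat \<Rightarrow> nat) set" where
  "PAut n C = {\<sigma>. \<sigma> permutes {0..<n} \<and> perm_act \<sigma> ` C = C}"

definition PAut_group :: "nat \<Rightarrow> (nat \<Rightarrow> bit) set \<Rightarrow> (nat \<Rightarrow> nat) monoid" where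
  "PAut_group n C = \<lparr>carrier = PAut n C, mult = (\<circ>), one = id\<rparr>"

end

theory Submission
  imports Defs
begin

text \<open>
  Let \<open>S\<close> be the support of \<open>C\<close>. Double counting the ones of the code words on which a nonzero
  linear form \<open>g\<close> takes the value 1 shows that exactly \<open>r = 2w - |S|\<close> coordinates of \<open>C\<close>
  realize \<open>g\<close>, independently of \<open>g\<close>: the code is an \<open>r\<close>-fold replicated simplex code.

  Since \<open>S\<^sub>3\<close> has order 6, it has no subgroup of order 4, i.e. no two distinct commuting
  involutions. If \<open>r \<ge> 2\<close>, transpositions of two repeated coordinates give such a pair. If
  \<open>r = 1\<close>, every \<open>u \<in> C\<close> and coordinate \<open>a \<in> S\<close> with \<open>u\<^sub>a = 0\<close> give the coordinate involution
  that realizes the transvection \<open>c \<mapsto> c + c\<^sub>a u\<close>; two of them, or one together with a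
  transposition of two zero coordinates, again commute. This leaves \<open>k = 2\<close>, \<open>r = 1\<close> and at most
  one zero coordinate, where \<open>2(|C| - 1)w = |C| |S|\<close> forces \<open>w = 2\<close> and \<open>|S| = 3\<close>. Conversely,
  in that case \<open>C\<close> consists of all even words on \<open>S\<close> and \<open>PAut(C)\<close> is the full symmetric group
  of \<open>S\<close>.
\<close>

(* Keep \<open>+\<close> on bit as ring addition, so that the group and ring simp rules apply. *)
declare add_bit_eq_xor [simp del]

lemma bit_0_or_1: "(x::bit) = 0 \<or> x = 1"
  by auto

lemma bit_add_self [simp]: "(x::bit) + x = 0"
  by (cases x) auto

lemma bit_add_add_self [simp]: "(x::bit) + y + y = x"
  by (metis add.assoc bit_add_self add.right_neutral)

lemma bit_eq_add_self_iff: "(x::bit) = x + y \<longleftrightarrow> y = 0"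
  by (metis add.right_neutral add_left_cancel)

lemma word_add_self [simp]: "(x::nat \<Rightarrow> bit) + x = 0"
  by (auto simp: fun_eq_iff)

lemma word_add_eq_0_iff: "(u::nat \<Rightarrow> bit) + v = 0 \<longleftrightarrow> u = v"
  by (metis add_left_cancel word_add_self)

lemma word_eq_iff_ones: "(c::nat \<Rightarrow> bit) = d \<longleftrightarrow> (\<forall>x. c x = 1 \<longleftrightarrow> d x = 1)"
  by (metis bit_not_one_iff ext)

global_interpretation F2: vector_space f2scale
  by unfold_locales (auto simp: f2scale_def fun_eq_iff algebra_simps)

lemma finite_F2n: "finite (F2n n)"
proof -
  have "F2n n = {f. \<forall>x. (x \<in> {0..<n} \<longrightarrow> f x \<in> (UNIV::bit set)) \<and> (x \<notin> {0..<n} \<longrightarrow> f x = 0)}"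
    by (auto simp: F2n_def)
  moreover have "(UNIV::bit set) = {0, 1}"
    using bit_0_or_1 by auto
  then have "finite (UNIV::bit set)"
    by (metis finite.emptyI finite.insertI)
  ultimately show ?thesis
    using finite_set_of_finite_funs[of "{0..<n}" "UNIV::bit set" 0] by simp
qed

lemma hweight_eq_card_ones_below:
  assumes "c \<in> F2n n"
  shows "hweight c = card {l\<in>{0..<n}. c l = 1}"
  unfolding hweight_def
  by (rule arg_cong[where f=card]) (use assms in \<open>auto simp: F2n_def not_le[symmetric]\<close>)

lemma sum_hweight_eq_sum_card_ones:
  assumes "finite A" "A \<subseteq> F2n n"
  shows "(\<Sum>c\<in>A. hweight c) = (\<Sum>l\<in>{0..<n}. card {c\<in>A. c l = 1})"
proof -
  have "(\<Sum>c\<in>A. hweight c) = (\<Sum>c\<in>A. \<Sum>l\<in>{0..<n}. if c l = 1 then 1 else 0)"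
  proof (rule sum.cong[OF refl])
    fix c assume "c \<in> A"
    then have "hweight c = card {l\<in>{0..<n}. c l = 1}"
      using assms(2) by (intro hweight_eq_card_ones_below) auto
    also have "\<dots> = (\<Sum>l\<in>{0..<n}. if c l = 1 then 1 else 0)"
      by (simp only: card_eq_sum sum.inter_filter[OF finite_atLeastLessThan])
    finally show "hweight c = (\<Sum>l\<in>{0..<n}. if c l = 1 then 1 else 0)" .
  qed
  also have "\<dots> = (\<Sum>l\<in>{0..<n}. \<Sum>c\<in>A. if c l = 1 then 1 else 0)"
    by (rule sum.swap)
  also have "\<dots> = (\<Sum>l\<in>{0..<n}. card {c\<in>A. c l = 1})"
    by (simp only: card_eq_sum sum.inter_filter[OF assms(1)])
  finally show ?thesis .
qed

lemma sum_of_bool_mem_eq_card: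
  assumes "finite A" "X \<subseteq> A"
  shows "(\<Sum>x\<in>A. of_bool (x \<in> X) :: nat) = card X"
  using assms by (simp add: Int_absorb1 Int_absorb2)

lemma span_pair_subset: "F2.span {u, v} \<subseteq> {0, u, v, u + v}"
proof
  fix x assume "x \<in> F2.span {u, v}"
  then obtain k where "x - f2scale k u \<in> F2.span {v}"
    using F2.span_insert[of u "{v}"] by auto
  then obtain k' where "x - f2scale k u - f2scale k' v \<in> F2.span {}"
    using F2.span_insert[of v "{}"] by auto
  then have "x = f2scale k u + f2scale k' v"
    by (simp add: algebra_simps)
  moreover have "f2scale 0 y = 0" "f2scale 1 y = y" for y
    by (auto simp: f2scale_def fun_eq_iff)
  ultimately show "x \<in> {0, u, v, u + v}"
    using bit_0_or_1[of k] bit_0_or_1[of k'] by auto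
qed

definition weight_0_or_2_words :: "nat set \<Rightarrow> (nat \<Rightarrow> bit) set" where
  "weight_0_or_2_words P = {c. (\<forall>l. c l = 1 \<longrightarrow> l \<in> P) \<and> (c = 0 \<or> card {l. c l = 1} = 2)}"

lemma card_weight_0_or_2_words_le:
  assumes P: "finite P" "card P = 3"
  shows "card (weight_0_or_2_words P) \<le> 4"
proof -
  define ones where "ones c = {l. c l = 1}" for c :: "nat \<Rightarrow> bit"
  have inj: "inj_on ones (weight_0_or_2_words P)"
    by (rule inj_onI) (auto simp: ones_def word_eq_iff_ones)
  have "ones ` weight_0_or_2_words P \<subseteq> insert {} {B. B \<subseteq> P \<and> card B = 2}"
    by (auto simp: ones_def weight_0_or_2_words_def)
  then have "card (ones ` weight_0_or_2_words P) \<le> card (insert {} {B. B \<subseteq> P \<and> card B = 2})"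
    by (rule card_mono[rotated]) (simp add: P)
  also have "\<dots> \<le> Suc (card {B. B \<subseteq> P \<and> card B = 2})"
    by (rule card_insert_le_m1) simp_all
  also have "card {B. B \<subseteq> P \<and> card B = 2} = 3"
    using n_subsets[OF P(1), of 2] P(2) by (simp add: numeral_eq_Suc)
  finally show ?thesis
    using card_image[OF inj] by simp
qed

lemma finite_weight_0_or_2_words:
  assumes "P \<subseteq> {0..<n}"
  shows "finite (weight_0_or_2_words P)"
proof (rule finite_subset[OF _ finite_F2n[of n]])
  show "weight_0_or_2_words P \<subseteq> F2n n"
  proof
    fix c assume "c \<in> weight_0_or_2_words P"
    then have "c l = 1 \<Longrightarrow> l < n" for l
      using assms by (auto simp: weight_0_or_2_words_def)
    then show "c \<in> F2n n"
      by (auto simp: F2n_def) (metis bit_not_one_iff not_le)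
  qed
qed

lemma comp_permutes_in_weight_0_or_2_words:
  assumes \<tau>: "\<tau> permutes P" and c: "c \<in> weight_0_or_2_words P"
  shows "c \<circ> \<tau> \<in> weight_0_or_2_words P"
  unfolding weight_0_or_2_words_def
proof (intro CollectI conjI)
  show "\<forall>l. (c \<circ> \<tau>) l = 1 \<longrightarrow> l \<in> P"
  proof (intro allI impI)
    fix l assume "(c \<circ> \<tau>) l = 1"
    then have "\<tau> l \<in> P"
      using c by (auto simp: weight_0_or_2_words_def)
    then show "l \<in> P"
      using \<tau> by (metis permutes_not_in)
  qed
  have "{l. (c \<circ> \<tau>) l = 1} = \<tau> -` {l. c l = 1}"
    by auto
  moreover have "card (\<tau> -` {l. c l = 1}) = card {l. c l = 1}"
    by (rule card_vimage_inj) (use permutes_inj[OF \<tau>] permutes_surj[OF \<tau>] in auto)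
  moreover have "c \<circ> \<tau> = 0 \<longleftrightarrow> c = 0"
  proof
    assume "c \<circ> \<tau> = 0"
    then have "c (\<tau> (inv_into UNIV \<tau> x)) = 0" for x
      by (metis comp_apply zero_fun_def)
    then show "c = 0"
      using permutes_inverses(1)[OF \<tau>] by (auto simp: fun_eq_iff)
  qed (simp add: zero_fun_def comp_def)
  ultimately show "c \<circ> \<tau> = 0 \<or> card {l. (c \<circ> \<tau>) l = 1} = 2"
    using c by (auto simp: weight_0_or_2_words_def)
qed

section \<open>Pairs of commuting involutions\<close>

definition Klein_pair :: "('a \<Rightarrow> 'a) \<Rightarrow> ('a \<Rightarrow> 'a) \<Rightarrow> bool" where
  "Klein_pair s t \<longleftrightarrow>
     s \<circ> s = id \<and> t \<circ> t = id \<and> s \<circ> t = t \<circ> s \<and> s \<noteq> id \<and> t \<noteq> id \<and> s \<noteq> t"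

lemma Klein_pair_transpositions:
  assumes "i \<noteq> i'" "j \<noteq> j'" "{i, i'} \<inter> {j, j'} = {}"
  shows "Klein_pair (Transposition.transpose i i') (Transposition.transpose j j')"
  unfolding Klein_pair_def
proof (intro conjI)
  show "Transposition.transpose i i' \<circ> Transposition.transpose j j' =
      Transposition.transpose j j' \<circ> Transposition.transpose i i'"
    by (rule ext) (use assms in \<open>auto simp: transpose_def\<close>)
  show "Transposition.transpose i i' \<noteq> Transposition.transpose j j'"
  proof
    assume "Transposition.transpose i i' = Transposition.transpose j j'"
    then have "Transposition.transpose i i' i = Transposition.transpose j j' i"
      by simp
    then show False
      using assms by auto
  qed
qed (use assms in \<open>simp_all add: transpose_eq_id_iff\<close>)

lemma subgroup_Klein_pair:
  assumes aG: "a \<in> carrier (sym_group m)" and bG: "b \<in> carrier (sym_group m)"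
    and Klein: "Klein_pair a b"
  shows "subgroup {id, a, b, a \<circ> b} (sym_group m)"
proof -
  let ?G = "sym_group m" and ?H = "{id, a, b, a \<circ> b}"
  have aa: "a \<circ> a = id" and bb: "b \<circ> b = id" and ab: "a \<circ> b = b \<circ> a"
    using Klein by (simp_all add: Klein_pair_def)
  have abG: "a \<circ> b \<in> carrier ?G"
    using aG bG by (simp add: sym_group_carrier permutes_compose)
  have aab: "a \<circ> (a \<circ> b) = b"
    using aa by (simp add: o_assoc)
  have bab: "b \<circ> (a \<circ> b) = a"
    by (simp add: ab o_assoc bb)
  have aba: "(a \<circ> b) \<circ> a = b"
    by (simp add: ab o_assoc[symmetric] aa)
  have abb: "(a \<circ> b) \<circ> b = a"
    by (simp add: o_assoc[symmetric] bb)
  have abab: "(a \<circ> b) \<circ> (a \<circ> b) = id"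
    by (simp only: o_assoc[symmetric] bab aa)
  show ?thesis
  proof
    show "?H \<subseteq> carrier ?G"
      using aG bG abG by (auto simp: sym_group_carrier)
    show "\<one>\<^bsub>?G\<^esub> \<in> ?H"
      by (simp add: sym_group_one)
    fix x y assume "x \<in> ?H" and "y \<in> ?H"
    then show "x \<otimes>\<^bsub>?G\<^esub> y \<in> ?H"
      unfolding sym_group_mult
      by (elim insertE emptyE; simp only: aa bb ab[symmetric] aab bab aba abb abab id_o o_id; simp)
  next
    fix x assume x: "x \<in> ?H"
    have "x \<circ> x = id"
      using x aa bb abab by auto
    moreover have "x \<in> carrier ?G"
      using x aG bG abG by (auto simp: sym_group_carrier)
    ultimately have "inv\<^bsub>?G\<^esub> x = x"
      using group.inv_equality[OF sym_group_is_group] by (simp add: sym_group_mult sym_group_one)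
    then show "inv\<^bsub>?G\<^esub> x \<in> ?H"
      using x by simp
  qed
qed

lemma card_Klein_pair_group:
  assumes "Klein_pair a b"
  shows "card {id, a, b, a \<circ> b} = 4"
proof -
  have aa: "a \<circ> a = id" and bb: "b \<circ> b = id" and na: "a \<noteq> id" and nb: "b \<noteq> id"
    and nab: "a \<noteq> b"
    using assms by (simp_all add: Klein_pair_def)
  have aab: "a \<circ> (a \<circ> b) = b"
    using aa by (simp add: o_assoc)
  have abb: "(a \<circ> b) \<circ> b = a"
    using bb by (simp add: o_assoc[symmetric])
  have "a \<circ> b \<noteq> id"
    using aab nab by auto
  moreover have "a \<circ> b \<noteq> a"
    using aab aa nb by auto
  moreover have "a \<circ> b \<noteq> b"
    using abb bb na by auto
  ultimately show ?thesis
    using na nb nab by simp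
qed

lemma sym_group_3_no_Klein_pair:
  assumes "a \<in> carrier (sym_group 3)" "b \<in> carrier (sym_group 3)" "Klein_pair a b"
  shows False
proof -
  have "card (rcosets\<^bsub>sym_group 3\<^esub> {id, a, b, a \<circ> b}) * 4 = order (sym_group 3)"
    using group.lagrange[OF sym_group_is_group subgroup_Klein_pair[OF assms]]
      card_Klein_pair_group[OF assms(3)] by simp
  also have "order (sym_group 3) = 6"
    by (simp add: order_def sym_group_card_carrier fact_numeral)
  finally show False
    by presburger
qed

lemma perm_act_id: "perm_act id v = v"
  by (simp add: perm_act_def inv_id fun_eq_iff)

lemma id_in_PAut: "id \<in> PAut n C"
  by (simp add: PAut_def perm_act_id)

lemma perm_act_involution: "\<sigma> \<circ> \<sigma> = id \<Longrightarrow> perm_act \<sigma> c = c \<circ> \<sigma>"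
  unfolding perm_act_def using inv_unique_comp[of \<sigma> \<sigma>] by (simp add: fun_eq_iff)

lemma involution_in_PAut:
  assumes \<sigma>\<sigma>: "\<sigma> \<circ> \<sigma> = id" and fixes_above: "\<And>x. n \<le> x \<Longrightarrow> \<sigma> x = x"
    and closed: "\<And>c. c \<in> C \<Longrightarrow> c \<circ> \<sigma> \<in> C"
  shows "\<sigma> \<in> PAut n C"
proof -
  have "\<sigma> (\<sigma> x) = x" for x
    using \<sigma>\<sigma> by (metis comp_apply id_apply)
  then have "\<sigma> permutes {0..<n}"
    unfolding permutes_def using fixes_above by (metis atLeastLessThan_iff not_le zero_le)
  moreover have "perm_act \<sigma> ` C = C"
  proof
    show "perm_act \<sigma> ` C \<subseteq> C"
      using closed perm_act_involution[OF \<sigma>\<sigma>] by auto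
    show "C \<subseteq> perm_act \<sigma> ` C"
    proof
      fix c assume c: "c \<in> C"
      have "c = perm_act \<sigma> (c \<circ> \<sigma>)"
        using perm_act_involution[OF \<sigma>\<sigma>] \<sigma>\<sigma> by (simp add: o_assoc[symmetric])
      then show "c \<in> perm_act \<sigma> ` C"
        using closed[OF c] by blast
    qed
  qed
  ultimately show ?thesis
    by (simp add: PAut_def)
qed

lemma transpose_in_PAut:
  assumes "i < n" "j < n" "\<And>c. c \<in> C \<Longrightarrow> c i = c j"
  shows "Transposition.transpose i j \<in> PAut n C"
proof (rule involution_in_PAut)
  show "Transposition.transpose i j \<circ> Transposition.transpose i j = id"
    by simp
  show "n \<le> x \<Longrightarrow> Transposition.transpose i j x = x" for x
    using assms by (simp add: transpose_def)
  fix c assume c: "c \<in> C"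
  have "c \<circ> Transposition.transpose i j = c"
    using assms(3)[OF c] by (auto simp: fun_eq_iff transpose_def)
  then show "c \<circ> Transposition.transpose i j \<in> C"
    using c by simp
qed

lemma surj_idempotent_eq_id:
  assumes "surj f" "f \<circ> f = f"
  shows "f = id"
proof
  fix x
  obtain y where y: "x = f y"
    using assms(1) by (metis surjD)
  have "f x = (f \<circ> f) y"
    using y by simp
  then show "f x = id x"
    using assms(2) y by simp
qed

lemma not_iso_sym_group_3_if_Klein_pair:
  assumes s: "s \<in> PAut n C" and t: "t \<in> PAut n C" and Klein: "Klein_pair s t"
  shows "\<not> PAut_group n C \<cong> sym_group 3"
proof
  assume "PAut_group n C \<cong> sym_group 3"
  then obtain f where f: "f \<in> hom (PAut_group n C) (sym_group 3)"
      "bij_betw f (PAut n C) (carrier (sym_group 3))"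
    unfolding is_iso_def iso_def by (auto simp: PAut_group_def)
  have f_comp: "f (x \<circ> y) = f x \<circ> f y" if "x \<in> PAut n C" "y \<in> PAut n C" for x y
    using f(1) that by (auto simp: hom_def PAut_group_def sym_group_def)
  have f_inj: "inj_on f (PAut n C)"
    using f(2) by (simp add: bij_betw_def)
  have f_in: "f x \<in> carrier (sym_group 3)" if "x \<in> PAut n C" for x
    using f(2) that by (auto simp: bij_betw_def)
  have f_id: "f id = id"
  proof (rule surj_idempotent_eq_id)
    show "surj (f id)"
      using f_in[OF id_in_PAut] by (simp add: sym_group_carrier permutes_surj)
    show "f id \<circ> f id = f id"
      using f_comp[OF id_in_PAut id_in_PAut] by simp
  qed
  have "f s \<noteq> id" "f t \<noteq> id" "f s \<noteq> f t"
    using inj_onD[OF f_inj _ s id_in_PAut] inj_onD[OF f_inj _ t id_in_PAut] inj_onD[OF f_inj _ s t]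
      f_id Klein by (auto simp: Klein_pair_def)
  then have "Klein_pair (f s) (f t)"
    using f_comp[OF s s] f_comp[OF t t] f_comp[OF s t] f_comp[OF t s] f_id Klein
    by (simp add: Klein_pair_def)
  then show False
    using sym_group_3_no_Klein_pair f_in s t by blast
qed

lemma permutations_iso_sym_group:
  fixes P :: "'a set"
  assumes P: "finite P" "card P = m"
  shows "\<lparr>carrier = {\<sigma>. \<sigma> permutes P}, mult = (\<circ>), one = id\<rparr> \<cong> sym_group m"
proof -
  define G :: "('a \<Rightarrow> 'a) monoid" where "G = \<lparr>carrier = {\<sigma>. \<sigma> permutes P}, mult = (\<circ>), one = id\<rparr>"
  obtain f where f: "bij_betw f P {1..m}"
    using finite_same_card_bij[OF P(1) finite_atLeastAtMost, of 1 m] P(2) by auto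
  define g where "g = inv_into P f"
  have g: "bij_betw g {1..m} P"
    unfolding g_def by (rule bij_betw_inv_into[OF f])
  have gf: "g (f x) = x" if "x \<in> P" for x
    using f that by (simp add: g_def bij_betw_def inv_into_f_f)
  have fg: "f (g y) = y" if "y \<in> {1..m}" for y
    using f that by (simp add: g_def bij_betw_def f_inv_into_f)
  have "map_permutation P f \<in> hom G (sym_group m)"
  proof (rule homI)
    show "map_permutation P f \<sigma> \<in> carrier (sym_group m)" if "\<sigma> \<in> carrier G" for \<sigma>
      using map_permutation_permutes[OF f] that by (simp add: G_def sym_group_carrier)
    show "map_permutation P f (\<sigma> \<otimes>\<^bsub>G\<^esub> \<tau>) = map_permutation P f \<sigma> \<otimes>\<^bsub>sym_group m\<^esub> map_permutation P f \<tau>"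
      if "\<tau> \<in> carrier G" for \<sigma> \<tau>
      using map_permutation_compose'[OF bij_betw_imp_inj_on[OF f]] that
      by (simp add: G_def sym_group_mult)
  qed
  moreover have "bij_betw (map_permutation P f) {\<sigma>. \<sigma> permutes P} {\<rho>. \<rho> permutes {1..m}}"
  proof (rule bij_betw_byWitness[where f'="map_permutation {1..m} g"])
    show "\<forall>\<sigma>\<in>{\<sigma>. \<sigma> permutes P}. map_permutation {1..m} g (map_permutation P f \<sigma>) = \<sigma>"
      using map_permutation_compose_inv[OF f _ gf] by blast
    show "\<forall>\<rho>\<in>{\<rho>. \<rho> permutes {1..m}}. map_permutation P f (map_permutation {1..m} g \<rho>) = \<rho>"
      using map_permutation_compose_inv[OF g _ fg] by blast
    show "map_permutation P f ` {\<sigma>. \<sigma> permutes P} \<subseteq> {\<rho>. \<rho> permutes {1..m}}"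
      using map_permutation_permutes[OF f] by blast
    show "map_permutation {1..m} g ` {\<rho>. \<rho> permutes {1..m}} \<subseteq> {\<sigma>. \<sigma> permutes P}"
      using map_permutation_permutes[OF g] by blast
  qed
  ultimately have "map_permutation P f \<in> iso G (sym_group m)"
    by (simp add: iso_def G_def sym_group_def)
  then show ?thesis
    unfolding G_def by (rule is_isoI)
qed

section \<open>Constant weight codes\<close>

locale cw_code =
  fixes n w :: nat and C :: "(nat \<Rightarrow> bit) set"
  assumes constant_weight: "constant_weight_code n w C"
begin

lemma code_subset_F2n: "C \<subseteq> F2n n"
  using constant_weight by (simp add: constant_weight_code_def binary_linear_code_def)

lemma subspace_code: "F2.subspace C"
  using constant_weight by (simp add: constant_weight_code_def binary_linear_code_def)

lemma zero_in_code [simp]: "0 \<in> C"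
  using F2.subspace_0[OF subspace_code] .

lemma add_in_code [simp]: "x \<in> C \<Longrightarrow> y \<in> C \<Longrightarrow> x + y \<in> C"
  using F2.subspace_add[OF subspace_code] .

lemma hweight_code: "v \<in> C \<Longrightarrow> v \<noteq> 0 \<Longrightarrow> hweight v = w"
  using constant_weight by (simp add: constant_weight_code_def)

lemma finite_code [simp]: "finite C"
  using finite_subset[OF code_subset_F2n finite_F2n] .

lemma code_vanishes_above: "c \<in> C \<Longrightarrow> n \<le> l \<Longrightarrow> c l = 0"
  using code_subset_F2n by (auto simp: F2n_def)

definition linear_form :: "((nat \<Rightarrow> bit) \<Rightarrow> bit) \<Rightarrow> bool" where
  "linear_form g \<longleftrightarrow> (\<forall>x\<in>C. \<forall>y\<in>C. g (x + y) = g x + g y)"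

definition code_support :: "nat set" where
  "code_support = {l\<in>{0..<n}. \<exists>c\<in>C. c l = 1}"

text \<open>The coordinates at which the linear form \<open>g\<close> occurs as a column of a generator matrix.\<close>

definition realizing_coordinates :: "((nat \<Rightarrow> bit) \<Rightarrow> bit) \<Rightarrow> nat set" where
  "realizing_coordinates g = {l\<in>{0..<n}. \<forall>c\<in>C. c l = g c}"

definition replication :: nat where
  "replication = 2 * w - card code_support"

lemma linear_form_0: "linear_form g \<Longrightarrow> g 0 = 0"
  unfolding linear_form_def by (metis zero_in_code add_0 bit_add_self add_left_cancel)

lemma linear_form_coordinate: "linear_form (\<lambda>c. c l)"
  by (simp add: linear_form_def)

lemma linear_form_add: "linear_form g \<Longrightarrow> linear_form h \<Longrightarrow> linear_form (\<lambda>c. g c + h c)"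
  by (simp add: linear_form_def ac_simps)

lemma code_support_subset_below: "code_support \<subseteq> {0..<n}"
  by (auto simp: code_support_def)

lemma realizing_coordinates_subset_below: "realizing_coordinates g \<subseteq> {0..<n}"
  by (auto simp: realizing_coordinates_def)

lemma finite_realizing_coordinates [simp]: "finite (realizing_coordinates g)"
  by (simp add: realizing_coordinates_def)

lemma finite_code_support [simp]: "finite code_support"
  by (simp add: code_support_def)

lemma code_vanishes_outside_support: "c \<in> C \<Longrightarrow> l \<notin> code_support \<Longrightarrow> c l = 0"
  by (metis (mono_tags, lifting) atLeastLessThan_iff bit_not_one_iff mem_Collect_eq not_le
      code_support_def code_vanishes_above zero_le)

lemma exists_support_one:
  assumes "c \<in> C" "c \<noteq> 0"
  shows "\<exists>i\<in>code_support. c i = 1"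
proof -
  obtain i where "c i \<noteq> 0"
    using assms(2) by (auto simp: fun_eq_iff)
  then have "c i = 1"
    by simp
  moreover have "i < n"
    using code_vanishes_above[OF assms(1), of i] \<open>c i = 1\<close> by (metis not_le zero_neq_one)
  ultimately show ?thesis
    using assms(1) by (auto simp: code_support_def)
qed

lemma hweight_code_eq: "c \<in> C \<Longrightarrow> hweight c = card {l\<in>{0..<n}. c l = 1}"
  using hweight_eq_card_ones_below code_subset_F2n by blast

lemma card_ones_of_linear_form:
  assumes "linear_form g" "c0 \<in> C" "g c0 = 1"
  shows "2 * card {c\<in>C. g c = 1} = card C"
proof -
  let ?A = "{c\<in>C. g c = 1}" and ?B = "{c\<in>C. g c = 0}"
  have "bij_betw (\<lambda>c. c + c0) ?B ?A"
  proof (rule bij_betw_byWitness[where f'="\<lambda>c. c + c0"])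
    show "\<forall>a\<in>?B. a + c0 + c0 = a" "\<forall>a\<in>?A. a + c0 + c0 = a"
      by (simp_all add: add.assoc)
    show "(\<lambda>c. c + c0) ` ?B \<subseteq> ?A" "(\<lambda>c. c + c0) ` ?A \<subseteq> ?B"
      using assms by (auto simp: linear_form_def)
  qed
  then have "card ?B = card ?A"
    by (rule bij_betw_same_card)
  moreover have "C = ?A \<union> ?B"
    using bit_0_or_1 by auto
  moreover have "card (?A \<union> ?B) = card ?A + card ?B"
    by (rule card_Un_disjoint) auto
  ultimately show ?thesis
    by simp
qed

lemma card_level_set_translate:
  assumes "linear_form g" "linear_form h" "t \<in> C"
  shows "card {c\<in>C. g c = a \<and> h c = b} = card {c\<in>C. g c = a + g t \<and> h c = b + h t}"
proof (rule bij_betw_same_card[of "\<lambda>c. c + t"], rule bij_betw_byWitness[where f'="\<lambda>c. c + t"])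
  show "\<forall>x\<in>{c\<in>C. g c = a \<and> h c = b}. x + t + t = x"
    "\<forall>x\<in>{c\<in>C. g c = a + g t \<and> h c = b + h t}. x + t + t = x"
    by (simp_all add: add.assoc)
  show "(\<lambda>c. c + t) ` {c\<in>C. g c = a \<and> h c = b} \<subseteq> {c\<in>C. g c = a + g t \<and> h c = b + h t}"
    using assms by (auto simp: linear_form_def)
  show "(\<lambda>c. c + t) ` {c\<in>C. g c = a + g t \<and> h c = b + h t} \<subseteq> {c\<in>C. g c = a \<and> h c = b}"
    using assms by (auto simp: linear_form_def add.assoc)
qed

text \<open>If \<open>g\<close> and \<open>h\<close> are distinct nonzero forms, \<open>(g, h)\<close> maps \<open>C\<close> onto \<open>F\<^sub>2\<^sup>2\<close>, with fibres of equal size.\<close>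

lemma card_ones_of_two_linear_forms:
  assumes g: "linear_form g" and h: "linear_form h"
    and x: "x \<in> C" "g x = 1" and y: "y \<in> C" "h y = 1" and d: "d \<in> C" "g d \<noteq> h d"
  shows "4 * card {c\<in>C. g c = 1 \<and> h c = 1} = card C"
proof -
  define fibre where "fibre a b = {c\<in>C. g c = a \<and> h c = b}" for a b
  have additive: "g (p + q) = g p + g q" "h (p + q) = h p + h q" if "p \<in> C" "q \<in> C" for p q
    using g h that by (auto simp: linear_form_def)
  have onto: "\<exists>t\<in>C. g t = a \<and> h t = b" for a b
  proof -
    have "\<exists>t\<in>{0, x, y, d, x + y, x + d, y + d}. g t = a \<and> h t = b"
      using x(2) y(2) d(2) additive[OF x(1) y(1)] additive[OF x(1) d(1)] additive[OF y(1) d(1)]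
        linear_form_0[OF g] linear_form_0[OF h]
      by (cases a; cases b; cases "h x"; cases "g y"; cases "g d"; cases "h d") simp_all
    moreover have "{0, x, y, d, x + y, x + d, y + d} \<subseteq> C"
      using x(1) y(1) d(1) by simp
    ultimately show ?thesis
      by blast
  qed
  have same_card: "card (fibre a b) = card (fibre 0 0)" for a b
  proof -
    obtain t where t: "t \<in> C" "g t = a" "h t = b"
      using onto by blast
    show ?thesis
      using card_level_set_translate[OF g h t(1), of 0 0] t by (simp add: fibre_def)
  qed
  have "C = (fibre 0 0 \<union> fibre 0 1) \<union> (fibre 1 0 \<union> fibre 1 1)"
    unfolding fibre_def using bit_0_or_1 by blast
  moreover have "card ((fibre 0 0 \<union> fibre 0 1) \<union> (fibre 1 0 \<union> fibre 1 1))
     = (card (fibre 0 0) + card (fibre 0 1)) + (card (fibre 1 0) + card (fibre 1 1))"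
    by (subst card_Un_disjoint, (auto simp: fibre_def)[3])+ simp
  ultimately show ?thesis
    using same_card[of 0 1] same_card[of 1 0] same_card[of 1 1] by (simp add: fibre_def)
qed

lemma card_ones_at_coordinate:
  assumes g: "linear_form g" and c0: "c0 \<in> C" "g c0 = 1" and l: "l < n"
  shows "4 * card {c\<in>C. g c = 1 \<and> c l = 1}
    = card C * (of_bool (l \<in> realizing_coordinates g) + of_bool (l \<in> code_support))"
proof -
  consider "l \<in> realizing_coordinates g" | "l \<notin> code_support"
    | "l \<in> code_support" "l \<notin> realizing_coordinates g"
    by blast
  then show ?thesis
  proof cases
    case 1
    then have "{c\<in>C. g c = 1 \<and> c l = 1} = {c\<in>C. g c = 1}" "l \<in> code_support"
      using c0 by (auto simp: realizing_coordinates_def code_support_def)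
    then show ?thesis
      using 1 card_ones_of_linear_form[OF g c0] by (simp; linarith)
  next
    case 2
    then have "{c\<in>C. g c = 1 \<and> c l = 1} = {}"
      using l by (auto simp: code_support_def)
    moreover have "c0 l \<noteq> g c0"
      using 2 c0 code_vanishes_outside_support by simp
    then have "l \<notin> realizing_coordinates g"
      using c0(1) by (auto simp: realizing_coordinates_def)
    ultimately show ?thesis
      using 2 by simp
  next
    case 3
    then obtain y d where "y \<in> C" "y l = 1" "d \<in> C" "g d \<noteq> d l"
      using l by (auto simp: code_support_def realizing_coordinates_def)
    then show ?thesis
      using card_ones_of_two_linear_forms[OF g linear_form_coordinate c0] 3 by simp
  qed
qed

lemma card_realizing_coordinates_add_card_support:
  assumes g: "linear_form g" and c0: "c0 \<in> C" "g c0 = 1"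
  shows "card (realizing_coordinates g) + card code_support = 2 * w"
proof -
  define A where "A = {c\<in>C. g c = 1}"
  have A_half: "2 * card A = card C"
    unfolding A_def by (rule card_ones_of_linear_form[OF g c0])
  have "card A > 0"
    using c0 by (auto simp: A_def card_gt_0_iff)
  have A_code: "finite A" "A \<subseteq> F2n n"
    using code_subset_F2n by (auto simp: A_def)
  have A_ones: "{c\<in>A. c l = 1} = {c\<in>C. g c = 1 \<and> c l = 1}" for l
    by (auto simp: A_def)
  have "(\<Sum>c\<in>A. hweight c) = (\<Sum>c\<in>A. w)"
    by (rule sum.cong) (use linear_form_0[OF g] in \<open>auto simp: A_def intro!: hweight_code\<close>)
  then have "4 * (card A * w) = (\<Sum>l\<in>{0..<n}. 4 * card {c\<in>C. g c = 1 \<and> c l = 1})"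
    using sum_hweight_eq_sum_card_ones[OF A_code] by (simp add: sum_distrib_left[symmetric] A_ones)
  also have "\<dots> = (\<Sum>l\<in>{0..<n}. card C *
      (of_bool (l \<in> realizing_coordinates g) + of_bool (l \<in> code_support)))"
    using card_ones_at_coordinate[OF g c0] by simp
  also have "\<dots> = card C * ((\<Sum>l\<in>{0..<n}. of_bool (l \<in> realizing_coordinates g))
      + (\<Sum>l\<in>{0..<n}. of_bool (l \<in> code_support)))"
    by (simp only: sum_distrib_left[symmetric] sum.distrib)
  also have "\<dots> = card C * (card (realizing_coordinates g) + card code_support)"
    by (simp only: sum_of_bool_mem_eq_card[OF finite_atLeastLessThan]
        realizing_coordinates_subset_below code_support_subset_below)
  finally have "4 * (card A * w) = 2 * card A * (card (realizing_coordinates g) + card code_support)"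
    by (simp only: A_half)
  then have "card A * (2 * w) = card A * (card (realizing_coordinates g) + card code_support)"
    by (simp add: algebra_simps)
  then show ?thesis
    using \<open>card A > 0\<close> by simp
qed

lemma card_realizing_coordinates:
  assumes "linear_form g" "c0 \<in> C" "g c0 = 1"
  shows "card (realizing_coordinates g) = replication"
  using card_realizing_coordinates_add_card_support[OF assms] unfolding replication_def by linarith



lemma coordinate_realizes_itself: "i \<in> code_support \<Longrightarrow> i \<in> realizing_coordinates (\<lambda>c. c i)"
  by (simp add: realizing_coordinates_def code_support_def)

lemma replication_pos:
  assumes "i \<in> code_support"
  shows "replication \<ge> 1"
proof -
  obtain c0 where "c0 \<in> C" "c0 i = 1"
    using assms by (auto simp: code_support_def)
  then have "card (realizing_coordinates (\<lambda>c. c i)) = replication"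
    by (rule card_realizing_coordinates[OF linear_form_coordinate])
  moreover have "realizing_coordinates (\<lambda>c. c i) \<noteq> {}"
    using coordinate_realizes_itself[OF assms] by blast
  ultimately show ?thesis
    by (metis card_0_eq finite_realizing_coordinates less_one not_le)
qed

lemma realizing_coordinate_unique:
  assumes "replication = 1" "linear_form g" "c0 \<in> C" "g c0 = 1"
    and "i \<in> realizing_coordinates g" "j \<in> realizing_coordinates g"
  shows "i = j"
proof -
  have "card (realizing_coordinates g) = 1"
    using card_realizing_coordinates[OF assms(2-4)] assms(1) by simp
  then obtain l where "realizing_coordinates g = {l}"
    by (rule card_1_singletonE)
  then show ?thesis
    using assms(5,6) by simp
qed

lemma realizing_coordinate_exists:
  assumes "replication \<ge> 1" "linear_form g" "c0 \<in> C" "g c0 = 1"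
  shows "\<exists>j. j \<in> realizing_coordinates g"
proof -
  have "card (realizing_coordinates g) \<noteq> 0"
    using card_realizing_coordinates[OF assms(2-4)] assms(1) by simp
  then show ?thesis
    by (metis card.empty ex_in_conv)
qed

text \<open>Double counting the ones of all code words: each coordinate of the support is 1 on half of the code.\<close>

lemma weight_equation: "2 * (card C - 1) * w = card C * card code_support"
proof -
  have "(\<Sum>c\<in>C. hweight c) = (\<Sum>c\<in>C - {0}. hweight c)"
    by (rule sum.mono_neutral_right) (auto simp: hweight_def)
  also have "\<dots> = (\<Sum>c\<in>C - {0}. w)"
    by (rule sum.cong) (auto simp: hweight_code)
  finally have "2 * (card C - 1) * w = 2 * (\<Sum>l\<in>{0..<n}. card {c\<in>C. c l = 1})"
    using sum_hweight_eq_sum_card_ones[OF finite_code code_subset_F2n] by simp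
  also have "\<dots> = (\<Sum>l\<in>{0..<n}. card C * of_bool (l \<in> code_support))"
    unfolding sum_distrib_left
  proof (rule sum.cong[OF refl])
    fix l assume "l \<in> {0..<n}"
    show "2 * card {c\<in>C. c l = 1} = card C * of_bool (l \<in> code_support)"
    proof (cases "l \<in> code_support")
      case True
      then obtain c0 where "c0 \<in> C" "c0 l = 1"
        by (auto simp: code_support_def)
      then show ?thesis
        using card_ones_of_linear_form[OF linear_form_coordinate] True by simp
    next
      case False
      then show ?thesis
        using code_vanishes_outside_support by simp
    qed
  qed
  also have "\<dots> = card C * card code_support"
    by (simp only: sum_distrib_left[symmetric] sum_of_bool_mem_eq_card[OF finite_atLeastLessThan]
        code_support_subset_below)
  finally show ?thesis .
qed

lemma exists_two_distinct_nonzero: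
  assumes "2 \<le> F2.dim C"
  shows "\<exists>u\<in>C. \<exists>v\<in>C. u \<noteq> 0 \<and> v \<noteq> 0 \<and> u \<noteq> v"
proof (rule ccontr)
  assume none: "\<not> ?thesis"
  obtain u where "C \<subseteq> {0, u}"
  proof (cases "\<exists>u\<in>C. u \<noteq> 0")
    case True
    then obtain u where "u \<in> C" "u \<noteq> 0"
      by blast
    then show ?thesis
      using none that[of u] by blast
  qed blast
  also have "\<dots> \<subseteq> F2.span {u}"
    using F2.span_zero F2.span_base by auto
  finally have "F2.dim C \<le> card {u}"
    by (rule F2.dim_le_card) simp
  then show False
    using assms by simp
qed

lemma card_code_ge_5:
  assumes "3 \<le> F2.dim C" "u \<in> C" "v \<in> C" "u \<noteq> 0" "v \<noteq> 0" "u \<noteq> v"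
  shows "card C \<ge> 5"
proof -
  have "\<not> C \<subseteq> {0, u, v, u + v}"
  proof
    assume "C \<subseteq> {0, u, v, u + v}"
    also have "\<dots> \<subseteq> F2.span {u, v}"
      by (simp add: F2.span_zero F2.span_base F2.span_add)
    finally have "F2.dim C \<le> card {u, v}"
      by (rule F2.dim_le_card) simp
    also have "\<dots> \<le> 2"
      by (simp add: card_insert_if)
    finally show False
      using assms by simp
  qed
  then obtain x where x: "x \<in> C" "x \<notin> {0, u, v, u + v}"
    by blast
  have "card {0, u, v, u + v, x} = 5"
    using assms x by (auto simp: card_insert_if word_add_eq_0_iff)
  moreover have "{0, u, v, u + v, x} \<subseteq> C"
    using assms x by auto
  ultimately show ?thesis
    by (metis card_mono finite_code)
qed

lemma card_code_eq_4:
  assumes "F2.dim C = 2"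
  shows "card C = 4"
proof -
  obtain B where B: "B \<subseteq> C" "F2.independent B" "C \<subseteq> F2.span B" "card B = F2.dim C"
    by (rule F2.basis_exists)
  then obtain u v where uv: "B = {u, v}" "u \<noteq> v"
    using assms by (metis card_2_iff)
  have "0 \<notin> B"
    using B(2) F2.dependent_zero by blast
  then have "u \<noteq> 0" "v \<noteq> 0"
    using uv by auto
  moreover have "C = {0, u, v, u + v}"
    using B(1,3) span_pair_subset[of u v] uv by auto
  ultimately show ?thesis
    using uv by (auto simp: card_insert_if word_add_eq_0_iff)
qed

lemma exists_separated_support_coordinates:
  assumes "u \<in> C" "v \<in> C" "u \<noteq> 0" "v \<noteq> 0" "u \<noteq> v"
  shows "\<exists>i\<in>code_support. \<exists>j\<in>code_support. \<exists>c\<in>C. c i \<noteq> c j"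
proof (rule ccontr)
  assume H: "\<not> ?thesis"
  obtain i where i: "i \<in> code_support" "u i = 1"
    using exists_support_one assms by blast
  obtain l where l: "l \<in> code_support" "v l = 1"
    using exists_support_one assms by blast
  have const_on_support: "c i' = c j'" if "i' \<in> code_support" "j' \<in> code_support" "c \<in> C" for c i' j'
    using H that by blast
  have "u x = v x" for x
  proof (cases "x \<in> code_support")
    case True
    then show ?thesis
      using const_on_support[OF True i(1) assms(1)] const_on_support[OF True l(1) assms(2)] i(2) l(2)
      by simp
  next
    case False
    then show ?thesis
      using code_vanishes_outside_support[OF assms(1) False] code_vanishes_outside_support[OF assms(2) False]
      by simp
  qed
  then show False
    using assms by auto
qed

lemma realizing_coordinates_subset_support:
  assumes "c0 \<in> C" "g c0 = 1"
  shows "realizing_coordinates g \<subseteq> code_support"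
proof
  fix x assume "x \<in> realizing_coordinates g"
  then have "x < n" "c0 x = 1"
    using assms by (auto simp: realizing_coordinates_def)
  then show "x \<in> code_support"
    using assms(1) by (auto simp: code_support_def)
qed

lemma exists_support_zero:
  assumes uv: "u \<in> C" "v \<in> C" "u \<noteq> 0" "v \<noteq> 0" "u \<noteq> v"
  shows "\<exists>a\<in>code_support. u a = 0"
proof (rule ccontr)
  assume "\<not> ?thesis"
  then have ones: "u a = 1" if "a \<in> code_support" for a
    using that by simp
  have "code_support = {l\<in>{0..<n}. u l = 1}"
    using ones uv(1) unfolding code_support_def by blast
  then have card_support: "card code_support = w"
    using hweight_code_eq[OF uv(1)] hweight_code[OF uv(1,3)] by simp
  obtain i j c where ij: "i \<in> code_support" "j \<in> code_support" "c \<in> C" "c i \<noteq> c j"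
    using exists_separated_support_coordinates[OF uv] by blast
  obtain c0 where "c0 \<in> C" "c0 i = 1"
    using ij(1) by (auto simp: code_support_def)
  then have "realizing_coordinates (\<lambda>c. c i) \<subseteq> code_support"
    by (rule realizing_coordinates_subset_support)
  moreover have "card (realizing_coordinates (\<lambda>c. c i)) = card code_support"
    using ij(1) card_realizing_coordinates[OF linear_form_coordinate] card_support
    by (auto simp: replication_def code_support_def)
  ultimately have "realizing_coordinates (\<lambda>c. c i) = code_support"
    by (simp add: card_subset_eq)
  then have "j \<in> realizing_coordinates (\<lambda>c. c i)"
    using ij(2) by simp
  then have "c j = c i"
    using ij(3) by (simp add: realizing_coordinates_def)
  then show False
    using ij(4) by simp
qed

lemma code_subset_weight_0_or_2_words:
  assumes "w = 2"
  shows "C \<subseteq> weight_0_or_2_words code_support"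
proof
  fix c assume c: "c \<in> C"
  have "c l = 1 \<Longrightarrow> l \<in> code_support" for l
    using code_vanishes_outside_support[OF c] by fastforce
  moreover have "c = 0 \<or> card {l. c l = 1} = 2"
    using hweight_code[OF c] assms by (auto simp: hweight_def)
  ultimately show "c \<in> weight_0_or_2_words code_support"
    by (simp add: weight_0_or_2_words_def)
qed

lemma card_code_le_4:
  assumes w2: "w = 2" and support3: "card code_support = 3"
  shows "card C \<le> 4"
proof -
  have "card C \<le> card (weight_0_or_2_words code_support)"
    by (rule card_mono[OF finite_weight_0_or_2_words[OF code_support_subset_below]
          code_subset_weight_0_or_2_words[OF w2]])
  also have "\<dots> \<le> 4"
    by (rule card_weight_0_or_2_words_le[OF finite_code_support support3])
  finally show ?thesis .
qed

section \<open>Permutation automorphisms of constant weight codes\<close>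

lemma PAut_maps_support:
  assumes \<sigma>: "\<sigma> \<in> PAut n C" and l: "l \<in> code_support"
  shows "\<sigma> l \<in> code_support"
proof -
  have s: "\<sigma> permutes {0..<n}" and im: "perm_act \<sigma> ` C = C"
    using \<sigma> by (auto simp: PAut_def)
  obtain c where c: "c \<in> C" "c l = 1"
    using l by (auto simp: code_support_def)
  have "perm_act \<sigma> c \<in> C"
    using im c by blast
  moreover have "perm_act \<sigma> c (\<sigma> l) = 1"
    using c permutes_inverses(2)[OF s] by (simp add: perm_act_def)
  moreover have "\<sigma> l < n"
    using permutes_in_image[OF s] l by (auto simp: code_support_def)
  ultimately show ?thesis
    by (auto simp: code_support_def)
qed

lemma PAut_permutes_support:
  assumes \<sigma>: "\<sigma> \<in> PAut n C" and few_zeros: "card ({0..<n} - code_support) \<le> 1"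
  shows "\<sigma> permutes code_support"
proof -
  have s: "\<sigma> permutes {0..<n}"
    using \<sigma> by (auto simp: PAut_def)
  have inj: "inj_on \<sigma> code_support"
    using permutes_inj[OF s] by (simp add: inj_on_def inj_def)
  have into: "\<sigma> l \<in> code_support" if "l \<in> code_support" for l
    using PAut_maps_support[OF \<sigma> that] .
  then have img: "\<sigma> ` code_support = code_support"
    using endo_inj_surj[OF finite_code_support _ inj] by auto
  show ?thesis
  proof (rule inj_imp_permutes[OF inj finite_code_support into])
    fix i assume i: "i \<notin> code_support"
    show "\<sigma> i = i"
    proof (cases "i < n")
      case False
      then show ?thesis
        using s by (simp add: permutes_not_in)
    next
      case True
      have "\<sigma> i \<notin> code_support"
      proof
        assume "\<sigma> i \<in> code_support"
        then obtain j where "j \<in> code_support" "\<sigma> j = \<sigma> i"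
          using img by force
        then show False
          using permutes_inj[OF s] i by (metis injD)
      qed
      moreover have "\<sigma> i < n"
        using permutes_in_image[OF s] True by auto
      ultimately show ?thesis
        using few_zeros True i card_le_Suc0_iff_eq[of "{0..<n} - code_support"] by auto
    qed
  qed
qed

lemma permutes_support_in_PAut:
  assumes w2: "w = 2" and support3: "card code_support = 3" and C4: "card C = 4"
    and \<sigma>: "\<sigma> permutes code_support"
  shows "\<sigma> \<in> PAut n C"
proof -
  have finite_words: "finite (weight_0_or_2_words code_support)"
    by (rule finite_weight_0_or_2_words[OF code_support_subset_below])
  have sub: "C \<subseteq> weight_0_or_2_words code_support"
    by (rule code_subset_weight_0_or_2_words[OF w2])
  have "card C = card (weight_0_or_2_words code_support)"
    using card_weight_0_or_2_words_le[OF finite_code_support support3] C4 card_mono[OF finite_words sub]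
    by linarith
  then have words_eq: "weight_0_or_2_words code_support = C"
    using card_subset_eq[OF finite_words sub] by simp
  have \<sigma>_inv: "inv_into UNIV \<sigma> permutes code_support"
    by (rule permutes_inv[OF \<sigma>])
  have act: "perm_act \<sigma> c = c \<circ> inv_into UNIV \<sigma>" for c
    by (simp add: perm_act_def fun_eq_iff)
  have "perm_act \<sigma> ` C = C"
  proof
    show "perm_act \<sigma> ` C \<subseteq> C"
      using comp_permutes_in_weight_0_or_2_words[OF \<sigma>_inv] act words_eq by auto
    show "C \<subseteq> perm_act \<sigma> ` C"
    proof
      fix c assume c: "c \<in> C"
      have "c = perm_act \<sigma> (c \<circ> \<sigma>)"
        using act permutes_inverses(1)[OF \<sigma>] by (simp add: fun_eq_iff)
      then show "c \<in> perm_act \<sigma> ` C"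
        using comp_permutes_in_weight_0_or_2_words[OF \<sigma>] c words_eq by blast
    qed
  qed
  moreover have "\<sigma> permutes {0..<n}"
    by (rule permutes_subset[OF \<sigma> code_support_subset_below])
  ultimately show ?thesis
    by (simp add: PAut_def)
qed

lemma Klein_pair_of_repeated_coordinates:
  assumes r: "replication \<ge> 2" and ij: "i \<in> code_support" "j \<in> code_support" "c \<in> C" "c i \<noteq> c j"
  shows "\<exists>s\<in>PAut n C. \<exists>t\<in>PAut n C. Klein_pair s t"
proof -
  have repeated: "\<exists>l'. l' \<in> realizing_coordinates (\<lambda>c. c l) \<and> l' \<noteq> l"
    if l: "l \<in> code_support" for l
  proof (rule ccontr)
    assume "\<not> ?thesis"
    then have "realizing_coordinates (\<lambda>c. c l) \<subseteq> {l}"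
      by auto
    then have "card (realizing_coordinates (\<lambda>c. c l)) \<le> 1"
      using card_mono[of "{l}"] by fastforce
    moreover obtain c0 where "c0 \<in> C" "c0 l = 1"
      using l by (auto simp: code_support_def)
    ultimately show False
      using r card_realizing_coordinates[OF linear_form_coordinate] by fastforce
  qed
  obtain i' j' where i': "i' \<in> realizing_coordinates (\<lambda>c. c i)" "i' \<noteq> i"
    and j': "j' \<in> realizing_coordinates (\<lambda>c. c j)" "j' \<noteq> j"
    using repeated ij(1,2) by blast
  have transpositions: "Transposition.transpose i i' \<in> PAut n C" "Transposition.transpose j j' \<in> PAut n C"
    using ij(1,2) i'(1) j'(1)
    by (auto intro!: transpose_in_PAut simp: code_support_def realizing_coordinates_def)
  have "c i' = c i" "c j' = c j"
    using i'(1) j'(1) ij(3) by (simp_all add: realizing_coordinates_def)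
  then have "{i, i'} \<inter> {j, j'} = {}"
    using ij(4) by auto
  then have "Klein_pair (Transposition.transpose i i') (Transposition.transpose j j')"
    using i'(2) j'(2) by (intro Klein_pair_transpositions) auto
  then show ?thesis
    using transpositions by blast
qed

text \<open>
  For replication 1 and \<open>u\<^sub>a = 0\<close>, the coordinate realizing \<open>c \<mapsto> c\<^sub>i + c\<^sub>a\<close> is unique for
  every \<open>i\<close> with \<open>u\<^sub>i = 1\<close>; permuting coordinates along it realizes \<open>c \<mapsto> c + c\<^sub>a u\<close>.
\<close>

definition transvection :: "(nat \<Rightarrow> bit) \<Rightarrow> nat \<Rightarrow> nat \<Rightarrow> nat" where
  "transvection u a i =
     (if i < n \<and> u i = 1 then (THE j. j \<in> realizing_coordinates (\<lambda>c. c i + c a)) else i)"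

lemma transvection_fixed: "\<not> (x < n \<and> u x = 1) \<Longrightarrow> transvection u a x = x"
  unfolding transvection_def by (rule if_not_P)

context
  fixes u :: "nat \<Rightarrow> bit" and a :: nat
  assumes replication_1: "replication = 1" and u: "u \<in> C" and u_a: "u a = 0"
begin

lemma transvection_realizes:
  assumes "i < n" "u i = 1"
  shows "transvection u a i \<in> realizing_coordinates (\<lambda>c. c i + c a)"
proof -
  have lin: "linear_form (\<lambda>c. c i + c a)"
    by (rule linear_form_add[OF linear_form_coordinate linear_form_coordinate])
  have ui: "u i + u a = 1"
    using assms u_a by simp
  then obtain j where j: "j \<in> realizing_coordinates (\<lambda>c. c i + c a)"
    using realizing_coordinate_exists[OF _ lin u] replication_1 by auto
  have "\<exists>!j. j \<in> realizing_coordinates (\<lambda>c. c i + c a)"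
    using realizing_coordinate_unique[OF replication_1 lin u ui _ j] j by blast
  then show ?thesis
    using theI'[of "\<lambda>j. j \<in> realizing_coordinates (\<lambda>c. c i + c a)"] assms
    by (simp add: transvection_def)
qed

lemma transvection_less:
  assumes "i < n" "u i = 1"
  shows "transvection u a i < n"
  using transvection_realizes[OF assms] by (simp add: realizing_coordinates_def)

lemma transvection_apply:
  assumes "i < n" "u i = 1" "c \<in> C"
  shows "c (transvection u a i) = c i + c a"
  using transvection_realizes[OF assms(1,2)] assms(3) by (simp add: realizing_coordinates_def)

lemma transvection_stays_in_ones:
  assumes "i < n" "u i = 1"
  shows "u (transvection u a i) = 1"
  using transvection_apply[OF assms u] assms u_a by simp

lemma transvection_involution: "transvection u a \<circ> transvection u a = id"
proof
  fix x
  show "(transvection u a \<circ> transvection u a) x = id x"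
  proof (cases "x < n \<and> u x = 1")
    case True
    define j where "j = transvection u a x"
    have j: "j < n" "u j = 1"
      using transvection_less transvection_stays_in_ones True by (auto simp: j_def)
    have "u j + u a = 1"
      using j u_a by simp
    moreover have "c x = c j + c a" if "c \<in> C" for c
      using transvection_apply[OF _ _ that] True by (simp add: j_def)
    then have "x \<in> realizing_coordinates (\<lambda>c. c j + c a)"
      using True by (simp add: realizing_coordinates_def)
    ultimately have "transvection u a j = x"
      using realizing_coordinate_unique[OF replication_1
          linear_form_add[OF linear_form_coordinate linear_form_coordinate] u]
        transvection_realizes[OF j] by blast
    then show ?thesis
      by (simp add: j_def)
  qed (simp add: transvection_fixed)
qed

lemma comp_transvection:
  assumes c: "c \<in> C"
  shows "c \<circ> transvection u a = (if c a = 1 then c + u else c)"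
proof
  fix x
  show "(c \<circ> transvection u a) x = (if c a = 1 then c + u else c) x"
  proof (cases "x < n \<and> u x = 1")
    case True
    then show ?thesis
      using transvection_apply[OF _ _ c] by (cases "c a = 1") auto
  next
    case False
    then have "u x = 0"
      using code_vanishes_above[OF u] by (metis bit_not_one_iff not_le)
    then show ?thesis
      using False by (simp add: transvection_fixed)
  qed
qed

lemma transvection_in_PAut: "transvection u a \<in> PAut n C"
proof (rule involution_in_PAut[OF transvection_involution])
  show "n \<le> x \<Longrightarrow> transvection u a x = x" for x
    by (simp add: transvection_fixed)
  show "c \<in> C \<Longrightarrow> c \<circ> transvection u a \<in> C" for c
    using comp_transvection u by simp
qed

lemma transvection_neq_id:
  assumes "u \<noteq> 0" "a \<in> code_support"
  shows "transvection u a \<noteq> id"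
proof
  assume id: "transvection u a = id"
  obtain i where i: "i \<in> code_support" "u i = 1"
    using exists_support_one[OF u assms(1)] by blast
  obtain c where c: "c \<in> C" "c a = 1"
    using assms(2) by (auto simp: code_support_def)
  have "c i = c i + c a"
    using transvection_apply[OF _ i(2) c(1)] i(1) id by (simp add: code_support_def)
  then show False
    using c by (simp add: bit_eq_add_self_iff)
qed

end

lemma transvections_commute:
  assumes r: "replication = 1" and u: "u \<in> C" and ab: "u a = 0" "u b = 0"
  shows "transvection u a \<circ> transvection u b = transvection u b \<circ> transvection u a"
proof
  fix y
  show "(transvection u a \<circ> transvection u b) y = (transvection u b \<circ> transvection u a) y"
  proof (cases "y < n \<and> u y = 1")
    case True
    define p where "p = transvection u b y"
    define q where "q = transvection u a y"
    have p: "p < n" "u p = 1" "\<And>c. c \<in> C \<Longrightarrow> c p = c y + c b"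
      using transvection_less[OF r u ab(2)] transvection_apply[OF r u ab(2)]
        transvection_stays_in_ones[OF r u ab(2)] True
      by (auto simp: p_def)
    have q: "q < n" "u q = 1" "\<And>c. c \<in> C \<Longrightarrow> c q = c y + c a"
      using transvection_less[OF r u ab(1)] transvection_apply[OF r u ab(1)]
        transvection_stays_in_ones[OF r u ab(1)] True
      by (auto simp: q_def)
    let ?g = "\<lambda>c. c y + c a + c b"
    have "c (transvection u a p) = ?g c" "c (transvection u b q) = ?g c" if "c \<in> C" for c
      using transvection_apply[OF r u ab(1) p(1,2) that] transvection_apply[OF r u ab(2) q(1,2) that]
        p(3)[OF that] q(3)[OF that]
      by (simp_all add: ac_simps)
    then have "transvection u a p \<in> realizing_coordinates ?g" "transvection u b q \<in> realizing_coordinates ?g"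
      using transvection_less[OF r u ab(1) p(1,2)] transvection_less[OF r u ab(2) q(1,2)]
      by (simp_all add: realizing_coordinates_def)
    moreover have "linear_form ?g"
      by (intro linear_form_add linear_form_coordinate)
    moreover have "u y + u a + u b = 1"
      using True ab by simp
    ultimately have "transvection u a p = transvection u b q"
      using realizing_coordinate_unique[OF r _ u] by blast
    then show ?thesis
      by (simp add: p_def q_def)
  qed (simp add: transvection_fixed)
qed

lemma exists_second_support_zero:
  assumes r: "replication = 1" and u: "u \<in> C" "u \<noteq> 0" and a: "a \<in> code_support" "u a = 0"
    and large: "card C \<ge> 5"
  shows "\<exists>b\<in>code_support. u b = 0 \<and> (\<exists>c\<in>C. c b \<noteq> c a)"
proof (rule ccontr)
  assume "\<not> ?thesis"
  then have zeros_parallel: "b \<in> realizing_coordinates (\<lambda>c. c a)"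
    if "b \<in> code_support" "u b = 0" for b
    using that code_support_subset_below by (auto simp: realizing_coordinates_def)
  obtain ca where "ca \<in> C" "ca a = 1"
    using a(1) by (auto simp: code_support_def)
  then have "card (realizing_coordinates (\<lambda>c. c a)) = 1"
    using card_realizing_coordinates[OF linear_form_coordinate] r by simp
  then have "realizing_coordinates (\<lambda>c. c a) = {a}"
    using coordinate_realizes_itself[OF a(1)] by (metis card_1_singletonE singletonD)
  then have zero_at_a: "b = a" if "b \<in> code_support" "u b = 0" for b
    using zeros_parallel[OF that] by simp
  have "code_support = insert a {l\<in>{0..<n}. u l = 1}"
  proof (intro equalityI subsetI)
    fix l assume "l \<in> code_support"
    then show "l \<in> insert a {l\<in>{0..<n}. u l = 1}"
      using zero_at_a[of l] code_support_subset_below by (cases "u l = 1") auto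
  next
    fix l assume "l \<in> insert a {l\<in>{0..<n}. u l = 1}"
    then show "l \<in> code_support"
      using a(1) u(1) by (auto simp: code_support_def)
  qed
  moreover have "a \<notin> {l\<in>{0..<n}. u l = 1}"
    using a(2) by simp
  ultimately have "card code_support = Suc (card {l\<in>{0..<n}. u l = 1})"
    by simp
  then have "card code_support = w + 1"
    using hweight_code_eq[OF u(1)] hweight_code[OF u] by simp
  then have "w = 2" "card code_support = 3"
    using r by (simp_all add: replication_def)
  then have "card C \<le> 4"
    by (rule card_code_le_4)
  then show False
    using large by simp
qed

lemma Klein_pair_of_two_transvections:
  assumes r: "replication = 1" and u: "u \<in> C" "u \<noteq> 0" and a: "a \<in> code_support" "u a = 0"
    and large: "card C \<ge> 5"
  shows "\<exists>s\<in>PAut n C. \<exists>t\<in>PAut n C. Klein_pair s t"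
proof -
  obtain b c where b: "b \<in> code_support" "u b = 0" and c: "c \<in> C" "c b \<noteq> c a"
    using exists_second_support_zero[OF assms] by blast
  obtain i where i: "i \<in> code_support" "u i = 1"
    using exists_support_one[OF u] by blast
  have "i < n"
    using i(1) code_support_subset_below by auto
  have "transvection u a \<noteq> transvection u b"
  proof
    assume "transvection u a = transvection u b"
    then have "c i + c a = c i + c b"
      using transvection_apply[OF r u(1) a(2) \<open>i < n\<close> i(2) c(1)]
        transvection_apply[OF r u(1) b(2) \<open>i < n\<close> i(2) c(1)] by simp
    then show False
      using c(2) by simp
  qed
  then have "Klein_pair (transvection u a) (transvection u b)"
    using transvection_involution[OF r u(1)] transvections_commute[OF r u(1)]
      transvection_neq_id[OF r u(1)] a b u(2) by (simp add: Klein_pair_def)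
  then show ?thesis
    using transvection_in_PAut[OF r u(1)] a(2) b(2) by blast
qed

lemma Klein_pair_of_transvection_and_zero_coordinates:
  assumes r: "replication = 1" and u: "u \<in> C" "u \<noteq> 0" and a: "a \<in> code_support" "u a = 0"
    and zeros: "card ({0..<n} - code_support) \<ge> 2"
  shows "\<exists>s\<in>PAut n C. \<exists>t\<in>PAut n C. Klein_pair s t"
proof -
  obtain Z where "Z \<subseteq> {0..<n} - code_support" "card Z = 2"
    using zeros by (meson obtain_subset_with_card_n)
  then obtain z1 z2 where z: "z1 \<in> {0..<n} - code_support" "z2 \<in> {0..<n} - code_support" "z1 \<noteq> z2"
    by (metis card_2_iff insert_subset)
  define s where "s = Transposition.transpose z1 z2"
  have uz: "u z1 = 0" "u z2 = 0"
    using code_vanishes_outside_support[OF u(1)] z by auto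
  have "c z1 = c z2" if "c \<in> C" for c
    using code_vanishes_outside_support[OF that] z(1,2) by simp
  then have s_PAut: "s \<in> PAut n C"
    unfolding s_def using z(1,2) by (intro transpose_in_PAut) auto
  have fixes_z: "transvection u a z1 = z1" "transvection u a z2 = z2"
    using uz by (simp_all add: transvection_fixed)
  have avoids_z: "transvection u a y \<noteq> z1 \<and> transvection u a y \<noteq> z2" if "y \<noteq> z1" "y \<noteq> z2" for y
  proof (cases "y < n \<and> u y = 1")
    case True
    then show ?thesis
      using transvection_stays_in_ones[OF r u(1) a(2)] uz by fastforce
  next
    case False
    then show ?thesis
      using that by (simp add: transvection_fixed)
  qed
  have "s \<circ> transvection u a = transvection u a \<circ> s"
    using fixes_z avoids_z by (auto simp: fun_eq_iff s_def transpose_def)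
  moreover have "s \<noteq> transvection u a"
    using fixes_z z(3) by (metis s_def transpose_apply_first)
  ultimately have "Klein_pair s (transvection u a)"
    using transvection_involution[OF r u(1) a(2)] transvection_neq_id[OF r u(1) a(2) u(2) a(1)] z(3)
    by (simp add: Klein_pair_def s_def transpose_eq_id_iff)
  then show ?thesis
    using s_PAut transvection_in_PAut[OF r u(1) a(2)] by blast
qed

lemma weight_equation_dim_2: "F2.dim C = 2 \<Longrightarrow> 3 * w = 2 * card code_support"
  using weight_equation card_code_eq_4 by (simp; linarith)

lemma few_zero_coordinates_iff:
  assumes "card code_support = 3"
  shows "card ({0..<n} - code_support) \<le> 1 \<longleftrightarrow> n \<in> {3, 4}"
  using assms card_mono[OF _ code_support_subset_below]
  by (auto simp: card_Diff_subset code_support_subset_below)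

section \<open>The codes with automorphism group \<open>S\<^sub>3\<close>\<close>

lemma parameters_if_iso_sym_group_3:
  assumes iso: "PAut_group n C \<cong> sym_group 3" and dim: "2 \<le> F2.dim C"
  shows "F2.dim C = 2 \<and> w = 2 \<and> n \<in> {3, 4}"
proof -
  have no_Klein: "\<not> Klein_pair s t" if "s \<in> PAut n C" "t \<in> PAut n C" for s t
    using not_iso_sym_group_3_if_Klein_pair[OF that] iso by blast
  obtain u v where uv: "u \<in> C" "v \<in> C" "u \<noteq> 0" "v \<noteq> 0" "u \<noteq> v"
    using exists_two_distinct_nonzero[OF dim] by blast
  obtain i j c where ij: "i \<in> code_support" "j \<in> code_support" "c \<in> C" "c i \<noteq> c j"
    using exists_separated_support_coordinates[OF uv] by blast
  obtain a where a: "a \<in> code_support" "u a = 0"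
    using exists_support_zero[OF uv] by blast
  have r: "replication = 1"
  proof (rule ccontr)
    assume "replication \<noteq> 1"
    then have "replication \<ge> 2"
      using replication_pos[OF ij(1)] by simp
    then show False
      using Klein_pair_of_repeated_coordinates[OF _ ij] no_Klein by blast
  qed
  have dim2: "F2.dim C = 2"
  proof (rule ccontr)
    assume "F2.dim C \<noteq> 2"
    then have "card C \<ge> 5"
      using card_code_ge_5[OF _ uv] dim by simp
    then show False
      using Klein_pair_of_two_transvections[OF r uv(1,3) a] no_Klein by blast
  qed
  have "3 * w = 2 * card code_support"
    by (rule weight_equation_dim_2[OF dim2])
  then have w2: "w = 2" and support3: "card code_support = 3"
    using r unfolding replication_def by auto
  have "card ({0..<n} - code_support) \<le> 1"
  proof (rule ccontr)
    assume "\<not> card ({0..<n} - code_support) \<le> 1"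
    then show False
      using Klein_pair_of_transvection_and_zero_coordinates[OF r uv(1,3) a] no_Klein by fastforce
  qed
  then show ?thesis
    using dim2 w2 few_zero_coordinates_iff[OF support3] by simp
qed

lemma iso_sym_group_3_if_parameters:
  assumes dim2: "F2.dim C = 2" and w2: "w = 2" and n: "n \<in> {3, 4}"
  shows "PAut_group n C \<cong> sym_group 3"
proof -
  have C4: "card C = 4"
    by (rule card_code_eq_4[OF dim2])
  have support3: "card code_support = 3"
    using weight_equation_dim_2[OF dim2] w2 by simp
  have "card ({0..<n} - code_support) \<le> 1"
    using few_zero_coordinates_iff[OF support3] n by simp
  then have "PAut n C = {\<sigma>. \<sigma> permutes code_support}"
    using PAut_permutes_support permutes_support_in_PAut[OF w2 support3 C4] by blast
  then show ?thesis
    using permutations_iso_sym_group[OF finite_code_support support3] by (simp add: PAut_group_def)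
qed

end

theorem theorem5p8:
  fixes n k w :: nat and C :: "(nat \<Rightarrow> bit) set"
  assumes "constant_weight_code n w C"
    and "code_dim C = k"
    and "k \<ge> 2"
  shows "PAut_group n C \<cong> sym_group 3 \<longleftrightarrow> k = 2 \<and> w = 2 \<and> n \<in> {3, 4}"
proof -
  interpret cw_code n w C
    by unfold_locales (rule assms(1))
  have "F2.dim C = k"
    using assms(2) by (simp add: code_dim_def)
  then show ?thesis
    using parameters_if_iso_sym_group_3 iso_sym_group_3_if_parameters assms(3) by blast
qed

end
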